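(* Let $\mathcal H$ be a two-dimensional real Hilbert space, $k\ge 2$, and let $T\in\mathcal L_s(^k\mathcal H)$ have norm one and attain its norm at $(\mathbf{x}_1,\ldots,\mathbf{x}_k)$, where $\mathbf{x}_1,\ldots,\mathbf{x}_k$ are norm one vectors with $\operatorname{span}\{\mathbf{x}_1,\ldots,\mathbf{x}_k\}=\mathcal H$. Then $T$ is an exposed point of the unit ball of $\mathcal L_s(^k\mathcal H)$.
   Context: $\mathcal L_s(^k\mathcal H)$ is the Banach space of symmetric $k$-linear forms on $\mathcal H$ with norm $\|T\|=\sup\{|T(\mathbf{w}_1,\ldots,\mathbf{w}_k)|:\|\mathbf{w}_i\|\le1\}$. $T$ attains its norm at $(\mathbf{x}_1,\ldots,\mathbf{x}_k)$ if $|T(\mathbf{x}_1,\ldots,\mathbf{x}_k)|=\|T\|$. A point $T$ of the unit ball $B$ of a Banach space $X$ is exposed if there is a continuous linear functional $\varphi$ on $X$ with $\varphi(T)>\varphi(S)$ for all $S\in B\setminus\{T\}$ (equivalently, $\varphi$ attains its maximum over $B$ only at $T$). *)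

theory Defs
  imports "HOL-Analysis.Analysis"
begin

text \<open>A k-linear form on a real inner product space 'a is represented as a function
  T :: (nat \<Rightarrow> 'a) \<Rightarrow> real acting on k-tuples (w 0, ..., w (k-1)); T only depends on
  the entries with index < k, and is linear in each of these entries.\<close>

definition multilinear_form :: "nat \<Rightarrow> ((nat \<Rightarrow> 'a::real_vector) \<Rightarrow> real) \<Rightarrow> bool" where
  "multilinear_form k T \<longleftrightarrow>
     (\<forall>w. T w = T (\<lambda>i. if i < k then w i else 0)) \<and>
     (\<forall>i<k. \<forall>w. linear (\<lambda>x. T (w(i := x))))"

definition symmetric_form :: "nat \<Rightarrow> ((nat \<Rightarrow> 'a::real_vector) \<Rightarrow> real) \<Rightarrow> bool" where
  "symmetric_form k T \<longleftrightarrow>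
     multilinear_form k T \<and> (\<forall>p w. p permutes {..<k} \<longrightarrow> T (w \<circ> p) = T w)"

definition Ls :: "nat \<Rightarrow> ((nat \<Rightarrow> 'a::real_normed_vector) \<Rightarrow> real) set" where
  "Ls k = {T. symmetric_form k T}"

definition form_norm :: "nat \<Rightarrow> ((nat \<Rightarrow> 'a::real_normed_vector) \<Rightarrow> real) \<Rightarrow> real" where
  "form_norm k T = Sup {\<bar>T w\<bar> | w. \<forall>i<k. norm (w i) \<le> 1}"

definition attains_norm_at ::
    "nat \<Rightarrow> ((nat \<Rightarrow> 'a::real_normed_vector) \<Rightarrow> real) \<Rightarrow> (nat \<Rightarrow> 'a) \<Rightarrow> bool" where
  "attains_norm_at k T x \<longleftrightarrow> \<bar>T x\<bar> = form_norm k T"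

definition Ls_ball :: "nat \<Rightarrow> ((nat \<Rightarrow> 'a::real_normed_vector) \<Rightarrow> real) set" where
  "Ls_ball k = {S \<in> Ls k. form_norm k S \<le> 1}"

definition cont_lin_functional ::
    "nat \<Rightarrow> (((nat \<Rightarrow> 'a::real_normed_vector) \<Rightarrow> real) \<Rightarrow> real) \<Rightarrow> bool" where
  "cont_lin_functional k \<phi> \<longleftrightarrow>
     (\<forall>S\<in>Ls k. \<forall>R\<in>Ls k. \<forall>a b::real.
        \<phi> (\<lambda>w. a * S w + b * R w) = a * \<phi> S + b * \<phi> R) \<and>
     (\<exists>C. \<forall>S\<in>Ls k. \<bar>\<phi> S\<bar> \<le> C * form_norm k S)"

definition exposed_point_Ls_ball ::
    "nat \<Rightarrow> ((nat \<Rightarrow> 'a::real_normed_vector) \<Rightarrow> real) \<Rightarrow> bool" where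
  "exposed_point_Ls_ball k T \<longleftrightarrow> T \<in> Ls_ball k \<and>
     (\<exists>\<phi>. cont_lin_functional k \<phi> \<and> (\<forall>S\<in>Ls_ball k. S \<noteq> T \<longrightarrow> \<phi> S < \<phi> T))"

end

theory Submission
  imports Defs
begin

text \<open>Identify \<open>\<H>\<close> isometrically with \<open>\<complex>\<close>. Call a tuple of unit vectors norming for a form
  N of norm at most one if N takes the value 1 there. At a norming tuple y, each slot functional
  has norm at most one and attains 1 at the unit vector \<open>y i\<close>, so it is \<open>z \<mapsto> \<langle>y i, z\<rangle>\<close>;
  if moreover \<open>y i \<noteq> \<plusminus>y j\<close>, then the two-slot slice is \<open>(u, v) \<mapsto> \<langle>y i y j, u v\<rangle>\<close>, since
  by symmetry it is determined by its values against the basis \<open>y i, y j\<close> of \<open>\<complex>\<close>. Consequently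
  two entries may be exchanged for any unit pair with the same product, and by such exchanges
  (through suitably generic intermediate values) every unit tuple w with
  \<open>\<Prod> w i = \<Prod> x i\<close> becomes norming. Homogeneity then gives
  \<open>T w = T x \<cdot> \<langle>\<Prod> x i, \<Prod> w i\<rangle>\<close> for every w, so T is the only form in the unit ball taking
  the value \<open>T x\<close> at x, and the functional \<open>S \<mapsto> T x \<cdot> S x\<close> exposes T.\<close>

lemma multilinear_form_cong:
  assumes "multilinear_form k M" "\<And>i. i < k \<Longrightarrow> y i = z i"
  shows "M y = M z"
proof -
  have "M y = M (\<lambda>i. if i < k then y i else 0)"
    using assms(1) unfolding multilinear_form_def by blast
  also have "\<dots> = M (\<lambda>i. if i < k then z i else 0)" using assms(2) by metis
  also have "\<dots> = M z" using assms(1) unfolding multilinear_form_def by metis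
  finally show ?thesis .
qed

lemma multilinear_form_linear:
  assumes "multilinear_form k M" "i < k"
  shows "linear (\<lambda>x. M (w(i := x)))"
  using assms unfolding multilinear_form_def by blast

lemma symmetric_form_multilinear: "symmetric_form k M \<Longrightarrow> multilinear_form k M"
  unfolding symmetric_form_def by blast

lemma symmetric_form_swap:
  assumes "symmetric_form k M" "i < k" "j < k" "i \<noteq> j"
  shows "M (w(i := u, j := v)) = M (w(i := v, j := u))"
proof -
  have "Transposition.transpose i j permutes {..<k}"
    using assms by (intro permutes_swap_id) auto
  moreover have "w(i := u, j := v) \<circ> Transposition.transpose i j = w(i := v, j := u)"
    using assms(4) by (auto simp: fun_eq_iff Transposition.transpose_def)
  ultimately show ?thesis using assms(1) unfolding symmetric_form_def by metis
qed

lemma symmetric_form_scale: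
  assumes "symmetric_form k M"
  shows "symmetric_form k (\<lambda>w. c * M w)"
proof -
  have "linear (\<lambda>x. c * M (w(i := x)))" if "i < k" for i w
    using linear_compose_scale_right[OF multilinear_form_linear[OF symmetric_form_multilinear[OF assms] that]]
    by simp
  then show ?thesis
    using assms unfolding symmetric_form_def multilinear_form_def by simp
qed

lemma symmetric_form_compose_linear:
  assumes "linear \<psi>" "symmetric_form k M"
  shows "symmetric_form k (\<lambda>w. M (\<psi> \<circ> w))"
proof -
  have trunc: "\<psi> \<circ> (\<lambda>i. if i < k then w i else 0) = (\<lambda>i. if i < k then (\<psi> \<circ> w) i else 0)"
    for w using linear_0[OF assms(1)] by auto
  have upd: "(\<lambda>x. M (\<psi> \<circ> w(i := x))) = (\<lambda>x. M ((\<psi> \<circ> w)(i := x))) \<circ> \<psi>" for w i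
    by (auto simp: fun_upd_comp)
  show ?thesis
    using assms unfolding symmetric_form_def multilinear_form_def trunc upd
    by (metis linear_compose comp_assoc)
qed

lemma multilinear_form_inner_prod:
  fixes c :: complex
  shows "multilinear_form k (\<lambda>w. c \<bullet> (\<Prod>i<k. w i))"
proof -
  have "linear (\<lambda>x. c \<bullet> (\<Prod>l<k. (w(i := x)) l))" if "i < k" for i w
  proof -
    have "(\<Prod>l<k. (w(i := x)) l) = x * prod w ({..<k} - {i})" for x
    proof -
      have "(\<Prod>l<k. (w(i := x)) l) = (w(i := x)) i * prod (w(i := x)) ({..<k} - {i})"
        using that by (intro prod.remove) auto
      also have "prod (w(i := x)) ({..<k} - {i}) = prod w ({..<k} - {i})"
        by (intro prod.cong) auto
      finally show ?thesis by simp
    qed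
    then show ?thesis
      by (intro linearI) (simp_all add: distrib_right inner_add_right mult_scaleR_left)
  qed
  then show ?thesis unfolding multilinear_form_def by simp
qed

lemma linear_abs_le_Basis_bound:
  fixes f :: "'a::euclidean_space \<Rightarrow> real" and C :: real
  assumes "linear f" "\<And>b. b \<in> Basis \<Longrightarrow> \<bar>f b\<bar> \<le> C" "norm v \<le> 1"
  shows "\<bar>f v\<bar> \<le> DIM('a) * C"
proof -
  have "f v = (\<Sum>b\<in>Basis. (v \<bullet> b) * f b)"
    using Linear_Algebra.linear_componentwise[OF assms(1), of v 1] by simp
  also have "\<bar>\<dots>\<bar> \<le> (\<Sum>b\<in>Basis. \<bar>v \<bullet> b\<bar> * \<bar>f b\<bar>)"
    unfolding abs_mult[symmetric] by (rule sum_abs)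
  also have "\<dots> \<le> (\<Sum>b\<in>(Basis::'a set). 1 * C)"
  proof (intro sum_mono mult_mono)
    fix b :: 'a assume "b \<in> Basis"
    then show "\<bar>v \<bullet> b\<bar> \<le> 1" using assms(3) Basis_le_norm[of b v] by linarith
    show "\<bar>f b\<bar> \<le> C" using \<open>b \<in> Basis\<close> assms(2) by blast
  qed auto
  finally show ?thesis by simp
qed

lemma multilinear_form_bounded:
  fixes M :: "(nat \<Rightarrow> 'a::euclidean_space) \<Rightarrow> real"
  assumes ml: "multilinear_form k M"
  obtains C where "\<And>w. \<forall>i<k. norm (w i) \<le> 1 \<Longrightarrow> \<bar>M w\<bar> \<le> C"
proof -
  have "\<exists>C. \<forall>w. (\<forall>i<n. norm (w i) \<le> 1) \<and> (\<forall>i\<in>{n..<k}. w i \<in> Basis) \<longrightarrow> \<bar>M w\<bar> \<le> C" for n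
  proof (induction n)
    case 0
    define S :: "(nat \<Rightarrow> 'a) set" where "S = {w. \<forall>i. (i \<in> {..<k} \<longrightarrow> w i \<in> insert 0 Basis) \<and> (i \<notin> {..<k} \<longrightarrow> w i = 0)}"
    have "finite S" unfolding S_def by (intro finite_set_of_finite_funs) auto
    have "\<bar>M w\<bar> \<le> (\<Sum>v\<in>S. \<bar>M v\<bar>)" if "\<forall>i\<in>{0..<k}. w i \<in> Basis" for w
    proof -
      have "M w = M (\<lambda>i. if i < k then w i else 0)" using ml unfolding multilinear_form_def by blast
      moreover have "(\<lambda>i. if i < k then w i else 0) \<in> S" unfolding S_def using that by auto
      ultimately show ?thesis using member_le_sum[of _ S "\<lambda>v. \<bar>M v\<bar>"] \<open>finite S\<close> by simp
    qed
    then show ?case by blast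
  next
    case (Suc n)
    then obtain C where C: "\<And>w. \<forall>i<n. norm (w i) \<le> 1 \<Longrightarrow> \<forall>i\<in>{n..<k}. w i \<in> Basis \<Longrightarrow> \<bar>M w\<bar> \<le> C"
      by blast
    have "\<bar>M w\<bar> \<le> DIM('a) * C"
      if w: "\<forall>i<Suc n. norm (w i) \<le> 1" "\<forall>i\<in>{Suc n..<k}. w i \<in> Basis" for w
    proof (cases "n < k")
      case True
      have "\<bar>M (w(n := w n))\<bar> \<le> DIM('a) * C"
      proof (rule linear_abs_le_Basis_bound[where f = "\<lambda>x. M (w(n := x))"])
        show "linear (\<lambda>x. M (w(n := x)))" using ml True by (rule multilinear_form_linear)
        show "\<bar>M (w(n := b))\<bar> \<le> C" if "b \<in> Basis" for b
          using w that by (intro C) auto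
        show "norm (w n) \<le> 1" using w by simp
      qed
      then show ?thesis by simp
    next
      case False
      then have "\<bar>M w\<bar> \<le> C" using w by (intro C) auto
      moreover have "C \<le> real DIM('a) * C"
        using mult_right_mono[of 1 "real DIM('a)" C] DIM_positive[where 'a = 'a] \<open>\<bar>M w\<bar> \<le> C\<close>
        by simp
      ultimately show ?thesis by linarith
    qed
    then show ?case by blast
  qed
  from this[of k] obtain C where "\<forall>w. (\<forall>i<k. norm (w i) \<le> 1) \<longrightarrow> \<bar>M w\<bar> \<le> C" by auto
  then show ?thesis using that by blast
qed

lemma abs_le_form_norm:
  fixes M :: "(nat \<Rightarrow> 'a::euclidean_space) \<Rightarrow> real"
  assumes "multilinear_form k M" "\<forall>i<k. norm (w i) \<le> 1"
  shows "\<bar>M w\<bar> \<le> form_norm k M"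
proof -
  obtain C where "\<And>w. \<forall>i<k. norm (w i) \<le> 1 \<Longrightarrow> \<bar>M w\<bar> \<le> C"
    using multilinear_form_bounded[OF assms(1)] by blast
  then have "bdd_above {\<bar>M w\<bar> | w. \<forall>i<k. norm (w i) \<le> 1}" by (intro bdd_aboveI[where M = C]) auto
  then show ?thesis unfolding form_norm_def using assms(2) by (intro cSup_upper) auto
qed

lemma multilinear_form_eqI_unit:
  fixes M1 M2 :: "(nat \<Rightarrow> 'a::real_normed_vector) \<Rightarrow> real"
  assumes ml1: "multilinear_form k M1" and ml2: "multilinear_form k M2"
    and unit: "\<And>v. \<forall>i<k. norm (v i) = 1 \<Longrightarrow> M1 v = M2 v"
  shows "M1 = M2"
proof -
  have "\<forall>w. (\<forall>i<k. n \<le> i \<longrightarrow> norm (w i) = 1) \<longrightarrow> M1 w = M2 w" for n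
  proof (induction n)
    case 0
    then show ?case using unit by simp
  next
    case (Suc n)
    have "M1 w = M2 w" if w: "\<forall>i<k. Suc n \<le> i \<longrightarrow> norm (w i) = 1" for w
    proof (cases "n < k")
      case False
      then show ?thesis using Suc.IH w by auto
    next
      case True
      have scale: "M w = norm (w n) * M (w(n := sgn (w n)))" if "multilinear_form k M" for M
      proof -
        have "w(n := norm (w n) *\<^sub>R sgn (w n)) = w"
          by (cases "w n = 0") (auto simp: sgn_div_norm fun_eq_iff)
        with linear_scale[OF multilinear_form_linear[OF that True, of w], of "norm (w n)" "sgn (w n)"]
        show ?thesis by simp
      qed
      show ?thesis
      proof (cases "w n = 0")
        case True
        then show ?thesis using scale[OF ml1] scale[OF ml2] by simp
      next
        case False
        have "\<forall>i<k. n \<le> i \<longrightarrow> norm ((w(n := sgn (w n))) i) = 1"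
          using w False by (auto simp: norm_sgn)
        then have "M1 (w(n := sgn (w n))) = M2 (w(n := sgn (w n)))" using Suc.IH by blast
        then show ?thesis using scale[OF ml1] scale[OF ml2] by simp
      qed
    qed
    then show ?case by blast
  qed
  from this[of k] show ?thesis by auto
qed

lemma prod_remove2:
  fixes f :: "'a \<Rightarrow> 'b::comm_monoid_mult"
  assumes "finite A" "i \<in> A" "j \<in> A" "i \<noteq> j"
  shows "prod f A = f i * f j * prod f (A - {i, j})"
proof -
  have "prod f A = f i * prod f (A - {i})" using assms by (simp add: prod.remove)
  also have "prod f (A - {i}) = f j * prod f (A - {i} - {j})" using assms by (simp add: prod.remove)
  finally show ?thesis by (simp add: mult.assoc insert_commute set_diff_eq)
qed

lemma prod_fun_upd2:
  fixes f :: "'a \<Rightarrow> 'b::comm_monoid_mult"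
  assumes "finite A" "i \<in> A" "j \<in> A" "i \<noteq> j" "u * v = f i * f j"
  shows "prod (f(i := u, j := v)) A = prod f A"
proof -
  have "prod (f(i := u, j := v)) (A - {i, j}) = prod f (A - {i, j})" by (intro prod.cong) auto
  then show ?thesis
    using assms prod_remove2[OF assms(1-4), of f] prod_remove2[OF assms(1-4), of "f(i := u, j := v)"]
    by simp
qed

lemma infinite_unit_circle: "infinite (sphere (0::complex) 1)"
proof
  assume "finite (sphere (0::complex) 1)"
  moreover have "connected (sphere (0::complex) 1)" by (rule connected_sphere) simp
  ultimately have "sphere (0::complex) 1 = {} \<or> (\<exists>c. sphere (0::complex) 1 = {c})"
    using connected_finite_iff_sing by blast
  moreover have "1 \<in> sphere (0::complex) 1" "-1 \<in> sphere (0::complex) 1" "(1::complex) \<noteq> -1"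
    by simp_all
  ultimately show False by (metis empty_iff singletonD)
qed

lemma linear_complex_eq_inner:
  fixes f :: "complex \<Rightarrow> real"
  assumes "linear f"
  shows "f z = Complex (f 1) (f \<i>) \<bullet> z"
  using Linear_Algebra.linear_componentwise[OF assms, of z 1]
  by (simp add: Basis_complex_def inner_complex_def)

lemma inner_mult_unit:
  fixes r a b :: complex
  assumes "cmod r = 1"
  shows "(r * a) \<bullet> (r * b) = a \<bullet> b"
proof -
  have "(r * a) \<bullet> (r * b) = ((Re r)\<^sup>2 + (Im r)\<^sup>2) * (a \<bullet> b)"
    by (simp add: inner_complex_def algebra_simps power2_eq_square)
  also have "(Re r)\<^sup>2 + (Im r)\<^sup>2 = 1" using assms by (metis cmod_power2 one_power2)
  finally show ?thesis by simp
qed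

lemma span_unit_pair_complex:
  fixes p q :: complex
  assumes "cmod p = 1" "cmod q = 1" "p \<noteq> q" "p \<noteq> - q"
  shows "span {p, q} = UNIV"
proof -
  have "p \<notin> span {q}"
  proof
    assume "p \<in> span {q}"
    then obtain t where "p = t *\<^sub>R q" by (auto simp: span_singleton)
    with assms have "\<bar>t\<bar> = 1" by simp
    with \<open>p = t *\<^sub>R q\<close> assms(3,4) show False by (auto simp: abs_if split: if_splits)
  qed
  moreover have "q \<noteq> 0" using assms(2) by auto
  ultimately have "independent {p, q}" by (simp add: independent_insertI)
  moreover have "card {p, q} = DIM(complex)" using assms(3) by simp
  ultimately show ?thesis using card_eq_dim[of "{p, q}" UNIV] by auto
qed

lemma linear_contraction_complex:
  fixes f :: "complex \<Rightarrow> real"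
  assumes lin: "linear f" and contr: "\<And>z. cmod z \<le> 1 \<Longrightarrow> \<bar>f z\<bar> \<le> 1"
    and p: "cmod p = 1" "f p = 1"
  shows "f z = p \<bullet> z"
proof -
  define g where "g = Complex (f 1) (f \<i>)"
  have f_eq: "f z = g \<bullet> z" for z
    unfolding g_def by (rule linear_complex_eq_inner[OF lin])
  have "norm g \<le> 1"
  proof (cases "g = 0")
    case False
    have "norm g = f (sgn g)"
      using False by (simp add: f_eq sgn_div_norm dot_square_norm power2_eq_square)
    also have "\<dots> \<le> 1" using contr[of "sgn g"] False by (simp add: norm_sgn)
    finally show ?thesis .
  qed simp
  then have "(norm g)\<^sup>2 \<le> 1" by (simp add: power_le_one)
  moreover have "g \<bullet> p = 1" "(norm p)\<^sup>2 = 1" using p f_eq[of p] by simp_all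
  ultimately have "(norm (g - p))\<^sup>2 \<le> 0" using dot_norm_neg[of g p] by argo
  then have "g = p" by simp
  then show ?thesis using f_eq by simp
qed

locale contractive_form =
  fixes k :: nat and N :: "(nat \<Rightarrow> complex) \<Rightarrow> real"
  assumes symmetric: "symmetric_form k N"
    and contractive: "\<And>w. \<forall>i<k. cmod (w i) \<le> 1 \<Longrightarrow> \<bar>N w\<bar> \<le> 1"
begin

lemma multilinear: "multilinear_form k N"
  using symmetric by (rule symmetric_form_multilinear)

definition norming :: "(nat \<Rightarrow> complex) \<Rightarrow> bool" where
  "norming y \<longleftrightarrow> (\<forall>i<k. cmod (y i) = 1) \<and> N y = 1"

lemma norming_slot:
  assumes y: "norming y" and i: "i < k"
  shows "N (y(i := u)) = y i \<bullet> u"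
proof (rule linear_contraction_complex[where f = "\<lambda>u. N (y(i := u))"])
  show "linear (\<lambda>u. N (y(i := u)))" using multilinear i by (rule multilinear_form_linear)
  show "\<bar>N (y(i := z))\<bar> \<le> 1" if "cmod z \<le> 1" for z
    using y that by (intro contractive) (auto simp: norming_def)
  show "cmod (y i) = 1" "N (y(i := y i)) = 1" using y i by (auto simp: norming_def)
qed

lemma norming_two_slots:
  assumes y: "norming y" and ij: "i < k" "j < k" "i \<noteq> j" and span: "span {y i, y j} = UNIV"
  shows "N (y(i := u, j := v)) = (y i * y j) \<bullet> (u * v)"
proof -
  \<comment> \<open>The defect D is symmetric, linear in each argument, and vanishes against the
     spanning pair \<open>y i\<close>, \<open>y j\<close>.\<close>
  define D where "D u v = N (y(i := u, j := v)) - (y i * y j) \<bullet> (u * v)" for u v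
  have lin: "linear (\<lambda>u. D u v)" for v
  proof -
    have "linear (\<lambda>u. N ((y(j := v))(i := u)))" using multilinear ij(1) by (rule multilinear_form_linear)
    moreover have "linear (\<lambda>u. (y i * y j) \<bullet> (u * v))"
      by (intro linearI) (simp_all add: distrib_right inner_add_right mult_scaleR_left)
    ultimately show ?thesis
      unfolding D_def using ij(3) by (simp add: fun_upd_twist linear_compose_sub)
  qed
  have unit: "cmod (y i) = 1" "cmod (y j) = 1" using y ij by (auto simp: norming_def)
  have "D (y i) v = 0" for v
  proof -
    have "N (y(i := y i, j := v)) = y j \<bullet> v" using norming_slot[OF y ij(2)] by simp
    then show ?thesis unfolding D_def using inner_mult_unit[OF unit(1)] by simp
  qed
  moreover have "D (y j) v = 0" for v
  proof -
    have "y(i := v, j := y j) = y(i := v)" using ij(3) by (auto simp: fun_eq_iff)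
    then have "N (y(i := v, j := y j)) = y i \<bullet> v" using norming_slot[OF y ij(1)] by simp
    then have "D v (y j) = 0" unfolding D_def using inner_mult_unit[OF unit(2)] by (simp add: mult.commute)
    then show ?thesis
      unfolding D_def using symmetric_form_swap[OF symmetric ij] by (simp add: mult.commute)
  qed
  ultimately have "D u v = 0"
    using linear_eq_0_on_span[OF lin[of v], of "{y i, y j}" u] span by auto
  then show ?thesis unfolding D_def by simp
qed

lemma norming_exchange:
  assumes y: "norming y" and ij: "i < k" "j < k" "i \<noteq> j" and ne: "y i \<noteq> y j" "y i \<noteq> - y j"
    and uv: "cmod u = 1" "cmod v = 1" "u * v = y i * y j"
  shows "norming (y(i := u, j := v))"
proof -
  have "span {y i, y j} = UNIV"
    using y ij ne by (intro span_unit_pair_complex) (auto simp: norming_def)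
  then have "N (y(i := u, j := v)) = (u * v) \<bullet> (u * v)"
    using norming_two_slots[OF y ij] uv(3) by simp
  also have "\<dots> = 1" using uv(1,2) by (simp add: dot_square_norm norm_mult)
  finally show ?thesis using y uv unfolding norming_def by auto
qed

lemma norming_move_slot:
  assumes z: "norming z" and abl: "a < k" "b < k" "l < k" "a \<noteq> b" "a \<noteq> l" "b \<noteq> l"
    and ne: "z a \<noteq> z b" "z a \<noteq> - z b" and t: "cmod t = 1"
  obtains z' where "norming z'" "z' a \<noteq> z' b" "z' a \<noteq> - z' b" "z' l = t"
    "\<And>i. i \<notin> {a, b, l} \<Longrightarrow> z' i = z i" "(\<Prod>i<k. z' i) = (\<Prod>i<k. z i)"
proof -
  have unit: "cmod (z i) = 1" if "i < k" for i using z that by (simp add: norming_def)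
  define c where "c = z a * z b * t / z l"
  \<comment> \<open>The rotation u of slot a is chosen generic: it must avoid \<open>\<plusminus>z l\<close> for the second
     exchange and \<open>\<plusminus>\<surd>(\<plusminus>c)\<close> to keep slots a and b in general position.\<close>
  define B where "B = {z l, - z l, csqrt c, - csqrt c, csqrt (- c), - csqrt (- c)}"
  have "infinite (sphere 0 1 - B)"
    using infinite_unit_circle by (rule Diff_infinite_finite[rotated]) (simp add: B_def)
  then obtain u where "u \<in> sphere 0 1 - B" using infinite_imp_nonempty by blast
  then have u: "cmod u = 1" "u \<notin> B" by simp_all
  have [simp]: "u \<noteq> 0" "z l \<noteq> 0" "t \<noteq> 0" using u unit[OF abl(3)] t by auto
  define z1 where "z1 = z(a := u, b := z a * z b / u)"
  have z1: "norming z1" unfolding z1_def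
    using abl ne u unit by (intro norming_exchange[OF z]) (auto simp: norm_mult norm_divide)
  have z1_al: "z1 a = u" "z1 l = z l" unfolding z1_def using abl by auto
  define z' where "z' = z1(a := u * z l / t, l := t)"
  have "norming z'" unfolding z'_def
    using abl u unit t z1_al by (intro norming_exchange[OF z1]) (auto simp: B_def norm_mult norm_divide)
  moreover have "z' a \<noteq> z' b" "z' a \<noteq> - z' b"
  proof -
    have z'_ab: "z' a = u * z l / t" "z' b = z a * z b / u" unfolding z'_def z1_def using abl by auto
    have "u * u \<noteq> s" if "s = c \<or> s = - c" for s
    proof
      assume "u * u = s"
      then have "u\<^sup>2 = (csqrt s)\<^sup>2" by (metis power2_csqrt power2_eq_square)
      then have "u = csqrt s \<or> u = - csqrt s" by (simp only: power2_eq_iff)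
      then show False using u(2) that unfolding B_def by auto
    qed
    then have "u * u \<noteq> c" "u * u \<noteq> - c" by simp_all
    then show "z' a \<noteq> z' b" "z' a \<noteq> - z' b"
      unfolding z'_ab c_def by (simp_all add: divide_simps mult_ac)
  qed
  moreover have "z' l = t" "\<And>i. i \<notin> {a, b, l} \<Longrightarrow> z' i = z i" unfolding z'_def z1_def by auto
  moreover have "(\<Prod>i<k. z' i) = (\<Prod>i<k. z i)"
  proof -
    have "(\<Prod>i<k. z' i) = (\<Prod>i<k. z1 i)" unfolding z'_def using abl z1_al by (intro prod_fun_upd2) auto
    also have "\<dots> = (\<Prod>i<k. z i)" unfolding z1_def using abl by (intro prod_fun_upd2) auto
    finally show ?thesis .
  qed
  ultimately show ?thesis using that by blast
qed

lemma norming_if_prod_eq: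
  assumes x: "norming x" and ab: "a < k" "b < k" "a \<noteq> b" and ne: "x a \<noteq> x b" "x a \<noteq> - x b"
    and y: "\<forall>i<k. cmod (y i) = 1" and prod: "(\<Prod>i<k. y i) = (\<Prod>i<k. x i)"
  shows "norming y"
proof -
  have reach: "\<exists>z. norming z \<and> z a \<noteq> z b \<and> z a \<noteq> - z b \<and> (\<Prod>i<k. z i) = (\<Prod>i<k. x i)
      \<and> (\<forall>i\<in>L. z i = y i)"
    if "finite L" "L \<subseteq> {..<k} - {a, b}" for L
    using that
  proof (induction L rule: finite_induct)
    case empty
    then show ?case using x ne by blast
  next
    case (insert l L)
    then obtain z where z: "norming z" "z a \<noteq> z b" "z a \<noteq> - z b" "(\<Prod>i<k. z i) = (\<Prod>i<k. x i)"
      "\<forall>i\<in>L. z i = y i" by blast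
    have l: "l < k" "a \<noteq> l" "b \<noteq> l" using insert.prems by auto
    have "cmod (y l) = 1" using y l(1) by simp
    then obtain z' where z': "norming z'" "z' a \<noteq> z' b" "z' a \<noteq> - z' b" "z' l = y l"
      "\<And>i. i \<notin> {a, b, l} \<Longrightarrow> z' i = z i" "(\<Prod>i<k. z' i) = (\<Prod>i<k. z i)"
      by (rule norming_move_slot[OF z(1) ab(1,2) l(1) ab(3) l(2,3) z(2,3)]) blast
    moreover have "i \<notin> {a, b, l}" if "i \<in> L" for i using that insert.hyps(2) insert.prems by auto
    ultimately show ?case using z(4,5) by (intro exI[of _ z']) auto
  qed
  obtain z where z: "norming z" "z a \<noteq> z b" "z a \<noteq> - z b" "(\<Prod>i<k. z i) = (\<Prod>i<k. x i)"
    and zy: "\<forall>i\<in>{..<k} - {a, b}. z i = y i"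
    using reach[of "{..<k} - {a, b}"] by blast
  define R where "R = prod y ({..<k} - {a, b})"
  have "R \<noteq> 0" unfolding R_def using y by (auto simp: prod_zero_iff)
  have "prod z ({..<k} - {a, b}) = R" unfolding R_def using zy by (intro prod.cong) auto
  then have "z a * z b * R = (\<Prod>i<k. z i)" using prod_remove2[of "{..<k}" a b z] ab by simp
  also have "\<dots> = y a * y b * R"
    using prod z(4) prod_remove2[of "{..<k}" a b y] ab unfolding R_def by simp
  finally have "y a * y b = z a * z b" using \<open>R \<noteq> 0\<close> by simp
  then have "norming (z(a := y a, b := y b))"
    using y ab ne by (intro norming_exchange[OF z(1) ab z(2,3)]) auto
  moreover have "N (z(a := y a, b := y b)) = N y"
    using zy by (intro multilinear_form_cong[OF multilinear]) auto
  ultimately show ?thesis using y unfolding norming_def by simp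
qed

lemma norming_formula_unit:
  assumes x: "norming x" and ab: "a < k" "b < k" "a \<noteq> b" and ne: "x a \<noteq> x b" "x a \<noteq> - x b"
    and w: "\<forall>i<k. cmod (w i) = 1"
  shows "N w = (\<Prod>i<k. x i) \<bullet> (\<Prod>i<k. w i)"
proof -
  define R where "R = prod w ({..<k} - {a})"
  define c where "c = (\<Prod>i<k. x i) / R"
  have R: "cmod R = 1" unfolding R_def using w by (simp add: prod_norm[symmetric] prod.neutral)
  have c: "cmod c = 1" unfolding c_def using x R by (simp add: norming_def norm_divide prod_norm[symmetric] prod.neutral)
  have prod_upd: "(\<Prod>i<k. (w(a := v)) i) = v * R" for v
  proof -
    have "(\<Prod>i<k. (w(a := v)) i) = (w(a := v)) a * prod (w(a := v)) ({..<k} - {a})"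
      using ab(1) by (intro prod.remove) auto
    also have "prod (w(a := v)) ({..<k} - {a}) = R" unfolding R_def by (intro prod.cong) auto
    finally show ?thesis by simp
  qed
  have "norming (w(a := c))"
  proof (rule norming_if_prod_eq[OF x ab ne])
    show "\<forall>i<k. cmod ((w(a := c)) i) = 1" using w c by simp
    show "(\<Prod>i<k. (w(a := c)) i) = (\<Prod>i<k. x i)" unfolding prod_upd c_def using R by auto
  qed
  then have "N w = c \<bullet> w a"
    using norming_slot[of "w(a := c)" a "w a"] ab(1) by simp
  also have "\<dots> = (R * c) \<bullet> (R * w a)" using R by (simp add: inner_mult_unit)
  also have "\<dots> = (\<Prod>i<k. x i) \<bullet> (\<Prod>i<k. w i)"
    using prod_upd[of "w a"] R unfolding c_def by (simp add: mult.commute)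
  finally show ?thesis .
qed

lemma norming_formula:
  assumes "norming x" "a < k" "b < k" "a \<noteq> b" "x a \<noteq> x b" "x a \<noteq> - x b"
  shows "N = (\<lambda>w. (\<Prod>i<k. x i) \<bullet> (\<Prod>i<k. w i))"
  using multilinear_form_inner_prod norming_formula_unit[OF assms]
  by (rule multilinear_form_eqI_unit[OF multilinear])

end

lemma exists_pair_not_parallel:
  fixes x :: "nat \<Rightarrow> 'a::euclidean_space"
  assumes dim: "DIM('a) = 2" and span: "span (x ` {..<k}) = UNIV"
  obtains a b where "a < k" "b < k" "a \<noteq> b" "x a \<noteq> x b" "x a \<noteq> - x b"
proof (rule ccontr)
  assume none: "\<not> thesis"
  note pair = that
  have "x a \<in> span {x 0}" if a: "a < k" for a
  proof (cases "a = 0")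
    case False
    then have "x a = x 0 \<or> x a = - x 0" using none pair[of a 0] a by auto
    then show ?thesis using span_base span_neg by (metis singletonI)
  qed (simp add: span_base)
  then have "span (x ` {..<k}) \<subseteq> span {x 0}" by (intro span_minimal) auto
  then have "dim (UNIV :: 'a set) \<le> card {x 0}" using span by (intro dim_le_card) auto
  then show False using dim by simp
qed

lemma symmetric_form_eq_inner_prod:
  fixes M :: "(nat \<Rightarrow> 'a::euclidean_space) \<Rightarrow> real" and \<phi> :: "'a \<Rightarrow> complex" and \<psi> :: "complex \<Rightarrow> 'a"
  assumes iso: "linear \<psi>" "\<And>z. norm (\<psi> z) = cmod z" "\<And>v. \<psi> (\<phi> v) = v"
    and M: "symmetric_form k M" "\<And>w. \<forall>i<k. norm (w i) \<le> 1 \<Longrightarrow> \<bar>M w\<bar> \<le> 1"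
    and x: "\<forall>i<k. norm (x i) = 1" "\<bar>M x\<bar> = 1"
    and ab: "a < k" "b < k" "a \<noteq> b" "x a \<noteq> x b" "x a \<noteq> - x b"
  shows "M w = M x * ((\<Prod>i<k. \<phi> (x i)) \<bullet> (\<Prod>i<k. \<phi> (w i)))"
proof -
  define N where "N w = M x * M (\<psi> \<circ> w)" for w
  interpret contractive_form k N
  proof
    show "symmetric_form k N"
      unfolding N_def by (intro symmetric_form_scale symmetric_form_compose_linear iso M)
    show "\<bar>N w\<bar> \<le> 1" if "\<forall>i<k. cmod (w i) \<le> 1" for w
      using that x(2) M(2)[of "\<psi> \<circ> w"] iso(2) by (simp add: N_def abs_mult)
  qed
  have \<psi>\<phi>: "\<psi> \<circ> (\<phi> \<circ> w) = w" for w using iso(3) by (simp add: fun_eq_iff)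
  have norm_\<phi>: "cmod (\<phi> v) = norm v" for v using iso(2,3) by metis
  have sq: "M x * M x = 1" using x(2) by (metis abs_mult_self_eq mult_1_left)
  have "norming (\<phi> \<circ> x)"
    unfolding norming_def N_def \<psi>\<phi> using x(1) sq by (simp add: norm_\<phi>)
  moreover have "\<phi> (x a) \<noteq> \<phi> (x b)" "\<phi> (x a) \<noteq> - \<phi> (x b)"
    using ab(4,5) iso(3) linear_neg[OF iso(1)] by metis+
  ultimately have "N (\<phi> \<circ> w) = (\<Prod>i<k. \<phi> (x i)) \<bullet> (\<Prod>i<k. \<phi> (w i))"
    using norming_formula[of "\<phi> \<circ> x" a b] ab(1-3) by simp
  then show ?thesis unfolding N_def \<psi>\<phi> using sq by (metis mult.assoc mult_1_left)
qed

lemma Ls_ball_abs_le_1: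
  fixes S :: "(nat \<Rightarrow> 'a::euclidean_space) \<Rightarrow> real"
  assumes S: "S \<in> Ls_ball k" and w: "\<forall>i<k. norm (w i) \<le> 1"
  shows "\<bar>S w\<bar> \<le> 1"
proof -
  have "symmetric_form k S" "form_norm k S \<le> 1" using S unfolding Ls_ball_def Ls_def by auto
  with abs_le_form_norm[OF symmetric_form_multilinear w] show ?thesis by fastforce
qed

lemma Ls_ball_eqI:
  fixes S T :: "(nat \<Rightarrow> 'a::euclidean_space) \<Rightarrow> real"
  assumes dim: "DIM('a) = 2" and span: "span (x ` {..<k}) = UNIV" and x: "\<forall>i<k. norm (x i) = 1"
    and ST: "S \<in> Ls_ball k" "T \<in> Ls_ball k" and Tx: "\<bar>T x\<bar> = 1" and eq: "S x = T x"
  shows "S = T"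
proof
  have "DIM(complex) = DIM('a)" using dim by simp
  then obtain \<psi> :: "complex \<Rightarrow> 'a" and \<phi> where iso: "linear \<psi>" "\<And>z. norm (\<psi> z) = cmod z" "\<And>v. \<psi> (\<phi> v) = v"
    by (rule isomorphisms_UNIV_UNIV) blast
  obtain a b where ab: "a < k" "b < k" "a \<noteq> b" "x a \<noteq> x b" "x a \<noteq> - x b"
    using exists_pair_not_parallel[OF dim span] by blast
  have formula: "M w = M x * ((\<Prod>i<k. \<phi> (x i)) \<bullet> (\<Prod>i<k. \<phi> (w i)))"
    if M: "M \<in> Ls_ball k" "\<bar>M x\<bar> = 1" for M w
  proof -
    have sym: "symmetric_form k M" using M(1) by (simp add: Ls_ball_def Ls_def)
    have bound: "\<bar>M v\<bar> \<le> 1" if "\<forall>i<k. norm (v i) \<le> 1" for v using M(1) that by (rule Ls_ball_abs_le_1)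
    show ?thesis by (rule symmetric_form_eq_inner_prod[OF iso sym bound x M(2) ab])
  qed
  have Sx: "\<bar>S x\<bar> = 1" using Tx eq by simp
  fix w
  show "S w = T w" using formula[OF ST(1) Sx, of w] formula[OF ST(2) Tx, of w] eq by simp
qed

lemma cont_lin_functional_eval:
  fixes x :: "nat \<Rightarrow> 'a::euclidean_space"
  assumes "\<forall>i<k. norm (x i) \<le> 1"
  shows "cont_lin_functional k (\<lambda>S. c * S x)"
  unfolding cont_lin_functional_def
proof (intro conjI exI ballI allI)
  fix S R :: "(nat \<Rightarrow> 'a) \<Rightarrow> real" and a b :: real
  show "c * (a * S x + b * R x) = a * (c * S x) + b * (c * R x)" by algebra
next
  fix S :: "(nat \<Rightarrow> 'a) \<Rightarrow> real" assume "S \<in> Ls k"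
  then have "\<bar>S x\<bar> \<le> form_norm k S"
    using assms by (intro abs_le_form_norm symmetric_form_multilinear) (simp add: Ls_def)
  then show "\<bar>c * S x\<bar> \<le> \<bar>c\<bar> * form_norm k S" by (simp add: abs_mult mult_left_mono)
qed

lemma Ls_ball_eval_less:
  fixes S T :: "(nat \<Rightarrow> 'a::euclidean_space) \<Rightarrow> real"
  assumes dim: "DIM('a) = 2" and span: "span (x ` {..<k}) = UNIV" and x: "\<forall>i<k. norm (x i) = 1"
    and T: "T \<in> Ls_ball k" "\<bar>T x\<bar> = 1" and S: "S \<in> Ls_ball k" "S \<noteq> T"
  shows "T x * S x < 1"
proof -
  have "\<bar>T x * S x\<bar> \<le> 1" using Ls_ball_abs_le_1[OF S(1)] x T(2) by (simp add: abs_mult)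
  moreover have "T x * S x \<noteq> 1"
  proof
    assume "T x * S x = 1"
    moreover have "T x * T x = 1" using T(2) abs_mult_self_eq[of "T x"] by simp
    ultimately have "S x = T x" by (metis mult.left_commute mult_1_right)
    then show False using Ls_ball_eqI[OF dim span x S(1) T] S(2) by blast
  qed
  ultimately show ?thesis by (simp add: abs_le_iff)
qed

theorem proposition1p5:
  fixes T :: "(nat \<Rightarrow> 'a::euclidean_space) \<Rightarrow> real"
    and x :: "nat \<Rightarrow> 'a"
    and k :: nat
  assumes "DIM('a) = 2"
    and "k \<ge> 2"
    and "T \<in> Ls k"
    and "form_norm k T = 1"
    and "\<forall>i<k. norm (x i) = 1"
    and "attains_norm_at k T x"
    and "span (x ` {..<k}) = UNIV"
  shows "exposed_point_Ls_ball k T"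
proof -
  have T: "T \<in> Ls_ball k" using assms(3,4) unfolding Ls_ball_def by simp
  have Tx: "\<bar>T x\<bar> = 1" using assms(4,6) unfolding attains_norm_at_def by simp
  have "cont_lin_functional k (\<lambda>S. T x * S x)"
    using assms(5) by (intro cont_lin_functional_eval) simp
  moreover have "T x * S x < T x * T x" if "S \<in> Ls_ball k" "S \<noteq> T" for S
    using Ls_ball_eval_less[OF assms(1,7,5) T Tx that] Tx abs_mult_self_eq[of "T x"] by simp
  ultimately show ?thesis unfolding exposed_point_Ls_ball_def using T by blast
qed

end
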